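(* Let $\tau_0,\tau_1,\tau_2>0$. For any $0<\alpha<\beta$, we have $\mathcal{B}_\alpha\subset\mathcal{B}_\beta$.
   Context: $\mathcal{C}=\{z\in\mathbb{C}:\Re z\ge(1+\tau_0)|\Im z|\}\cap\{z\in\mathbb{C}:\tau_1<\Re z<\tau_2\}$; for $a=(a_1,\dots,a_n)\in\mathbb{R}^n$, $p_a(z)=z^n+a_1z^{n-1}+\dots+a_n$; and for $\alpha>0$, $\mathcal{B}_\alpha=\{a\in\mathbb{R}^n:\ p_a(z)/z^n\in\mathcal{C}\text{ for all } z \text{ with } |z|=\alpha\}$. *)

theory Defs
  imports "HOL-Analysis.Analysis"
begin

definition regionC :: "real \<Rightarrow> real \<Rightarrow> real \<Rightarrow> complex set" where
  "regionC t0 t1 t2 = {z. Re z \<ge> (1 + t0) * \<bar>Im z\<bar>} \<inter> {z. t1 < Re z \<and> Re z < t2}"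

definition pa :: "real list \<Rightarrow> complex \<Rightarrow> complex" where
  "pa a z = z ^ length a + (\<Sum>k=1..length a. complex_of_real (a ! (k - 1)) * z ^ (length a - k))"

definition setB :: "real \<Rightarrow> real \<Rightarrow> real \<Rightarrow> nat \<Rightarrow> real \<Rightarrow> real list set" where
  "setB t0 t1 t2 n \<alpha> = {a. length a = n \<and>
      (\<forall>z. cmod z = \<alpha> \<longrightarrow> pa a z / z ^ n \<in> regionC t0 t1 t2)}"

end

theory Submission
  imports Defs "HOL-Complex_Analysis.Complex_Analysis"
begin

text \<open>With \<open>w = 1/z\<close>, \<open>p\<^sub>a(z)/z\<^sup>n\<close> becomes the entire function
  \<open>1 + a\<^sub>1 w + \<dots> + a\<^sub>n w\<^sup>n\<close>, and the circle \<open>|z| = \<beta>\<close> lies inside the disc \<open>|w| \<le> 1/\<alpha>\<close>.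
  The region \<open>\<C>\<close> is an intersection of half-planes \<open>a Re v + b Im v \<le> d\<close>; since
  \<open>a Re + b Im\<close> of a holomorphic function is harmonic, the maximum principle carries
  each half-plane condition from the circle \<open>|w| = 1/\<alpha>\<close> to the whole disc.\<close>

lemma entire_Re_le_on_cball:
  fixes g :: "complex \<Rightarrow> complex"
  assumes "R > 0" and "g holomorphic_on UNIV"
    and "\<And>v. cmod v = R \<Longrightarrow> Re (g v) \<le> M" and "cmod w \<le> R"
  shows "Re (g w) \<le> M"
proof -
  \<comment> \<open>apply the maximum modulus principle to \<open>exp \<circ> g\<close>, whose modulus is \<open>exp \<circ> Re \<circ> g\<close>\<close>
  have holo: "(\<lambda>v. exp (g v)) holomorphic_on UNIV"
    using assms(2) by (intro holomorphic_intros)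
  have "norm (exp (g w)) \<le> exp M"
  proof (rule maximum_modulus_frontier[where f = "\<lambda>v. exp (g v)" and S = "cball 0 R"])
    show "(\<lambda>v. exp (g v)) holomorphic_on interior (cball 0 R)"
      using holo by (rule holomorphic_on_subset) simp
    show "continuous_on (closure (cball 0 R)) (\<lambda>v. exp (g v))"
      using holomorphic_on_imp_continuous_on[OF holo] by (rule continuous_on_subset) simp
    show "w \<in> cball 0 R" using assms(4) by simp
    fix v assume "v \<in> frontier (cball (0::complex) R)"
    then show "norm (exp (g v)) \<le> exp M" using assms(1,3) by simp
  qed simp
  then show ?thesis by simp
qed

lemma entire_Re_less_on_cball:
  fixes g :: "complex \<Rightarrow> complex"
  assumes "R > 0" and holo: "g holomorphic_on UNIV"
    and "\<And>v. cmod v = R \<Longrightarrow> Re (g v) < d" and "cmod w \<le> R"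
  shows "Re (g w) < d"
proof -
  have "continuous_on (sphere 0 R) (\<lambda>v. Re (g v))"
    using holomorphic_on_imp_continuous_on[OF holo]
    by (intro continuous_intros) (auto intro: continuous_on_subset)
  moreover have "sphere (0::complex) R \<noteq> {}" using assms(1) by simp
  ultimately obtain s where s: "s \<in> sphere 0 R" "\<And>v. v \<in> sphere 0 R \<Longrightarrow> Re (g v) \<le> Re (g s)"
    using continuous_attains_sup[of "sphere 0 R" "\<lambda>v. Re (g v)"] by auto
  have "Re (g w) \<le> Re (g s)"
    using entire_Re_le_on_cball[OF assms(1) holo _ assms(4)] s(2) by simp
  also have "\<dots> < d" using assms(3) s(1) by simp
  finally show ?thesis .
qed

lemma entire_halfplane_on_cball:
  fixes g :: "complex \<Rightarrow> complex"
  assumes "R > 0" and "g holomorphic_on UNIV"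
    and "\<And>v. cmod v = R \<Longrightarrow> a * Re (g v) + b * Im (g v) \<le> d" and "cmod w \<le> R"
  shows "a * Re (g w) + b * Im (g w) \<le> d"
proof -
  have "Re (Complex a (- b) * g w) \<le> d"
  proof (rule entire_Re_le_on_cball[OF assms(1) _ _ assms(4)])
    show "(\<lambda>v. Complex a (- b) * g v) holomorphic_on UNIV"
      using assms(2) by (rule holomorphic_on_mult[OF holomorphic_on_const])
  qed (use assms(3) in simp)
  then show ?thesis by simp
qed

lemma entire_open_halfplane_on_cball:
  fixes g :: "complex \<Rightarrow> complex"
  assumes "R > 0" and "g holomorphic_on UNIV"
    and "\<And>v. cmod v = R \<Longrightarrow> a * Re (g v) + b * Im (g v) < d" and "cmod w \<le> R"
  shows "a * Re (g w) + b * Im (g w) < d"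
proof -
  have "Re (Complex a (- b) * g w) < d"
  proof (rule entire_Re_less_on_cball[OF assms(1) _ _ assms(4)])
    show "(\<lambda>v. Complex a (- b) * g v) holomorphic_on UNIV"
      using assms(2) by (rule holomorphic_on_mult[OF holomorphic_on_const])
  qed (use assms(3) in simp)
  then show ?thesis by simp
qed

lemma regionC_iff_halfplanes:
  assumes "t0 \<ge> -1"
  shows "v \<in> regionC t0 t1 t2 \<longleftrightarrow>
    - Re v + (1 + t0) * Im v \<le> 0 \<and> - Re v - (1 + t0) * Im v \<le> 0 \<and> t1 < Re v \<and> Re v < t2"
proof -
  have "(1 + t0) * \<bar>Im v\<bar> = max ((1 + t0) * Im v) (- ((1 + t0) * Im v))"
    using assms by (simp add: abs_if max_def mult_le_0_iff)
  then show ?thesis by (auto simp: regionC_def)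
qed

lemma entire_regionC_on_cball:
  fixes g :: "complex \<Rightarrow> complex"
  assumes t0: "t0 \<ge> -1" and R: "R > 0" and holo: "g holomorphic_on UNIV"
    and circle: "\<And>v. cmod v = R \<Longrightarrow> g v \<in> regionC t0 t1 t2" and w: "cmod w \<le> R"
  shows "g w \<in> regionC t0 t1 t2"
proof -
  note halfplanes = circle[unfolded regionC_iff_halfplanes[OF t0]]
  have "(- 1) * Re (g w) + (1 + t0) * Im (g w) \<le> 0"
    by (rule entire_halfplane_on_cball[OF R holo _ w]) (use halfplanes in force)
  moreover have "(- 1) * Re (g w) + (- 1 - t0) * Im (g w) \<le> 0"
    by (rule entire_halfplane_on_cball[OF R holo _ w]) (use halfplanes in \<open>force simp: algebra_simps\<close>)
  moreover have "(- 1) * Re (g w) + 0 * Im (g w) < - t1"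
    by (rule entire_open_halfplane_on_cball[OF R holo _ w]) (use halfplanes in force)
  moreover have "1 * Re (g w) + 0 * Im (g w) < t2"
    by (rule entire_open_halfplane_on_cball[OF R holo _ w]) (use halfplanes in force)
  ultimately show ?thesis
    unfolding regionC_iff_halfplanes[OF t0] by (simp add: algebra_simps)
qed

definition pa_reversed :: "real list \<Rightarrow> complex \<Rightarrow> complex" where
  "pa_reversed a w = 1 + (\<Sum>k=1..length a. complex_of_real (a ! (k - 1)) * w ^ k)"

lemma holomorphic_pa_reversed: "pa_reversed a holomorphic_on S"
  unfolding pa_reversed_def by (intro holomorphic_intros)

lemma pa_div_power_eq_pa_reversed:
  assumes "z \<noteq> 0"
  shows "pa a z / z ^ length a = pa_reversed a (1 / z)"
proof -
  have power_ratio: "z ^ (length a - k) / z ^ length a = (1 / z) ^ k" if "k \<le> length a" for k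
  proof -
    have "z ^ length a = z ^ (length a - k) * z ^ k"
      using that by (simp flip: power_add)
    then show ?thesis using assms by (simp add: power_one_over)
  qed
  have "pa a z / z ^ length a =
      1 + (\<Sum>k=1..length a. complex_of_real (a ! (k - 1)) * (z ^ (length a - k) / z ^ length a))"
    using assms unfolding pa_def by (simp add: add_divide_distrib sum_divide_distrib)
  also have "\<dots> = pa_reversed a (1 / z)"
    unfolding pa_reversed_def by (simp add: power_ratio)
  finally show ?thesis .
qed

theorem lemma4p3:
  fixes \<tau>0 \<tau>1 \<tau>2 \<alpha> \<beta> :: real and n :: nat
  assumes "\<tau>0 > 0" and "\<tau>1 > 0" and "\<tau>2 > 0"
    and "0 < \<alpha>" and "\<alpha> < \<beta>"
  shows "setB \<tau>0 \<tau>1 \<tau>2 n \<alpha> \<subseteq> setB \<tau>0 \<tau>1 \<tau>2 n \<beta>"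
proof
  fix a assume "a \<in> setB \<tau>0 \<tau>1 \<tau>2 n \<alpha>"
  then have len: "length a = n"
    and on_\<alpha>: "\<And>z. cmod z = \<alpha> \<Longrightarrow> pa a z / z ^ n \<in> regionC \<tau>0 \<tau>1 \<tau>2"
    unfolding setB_def by auto
  have reversed_at: "pa a z / z ^ n = pa_reversed a (1 / z)" if "z \<noteq> 0" for z
    using pa_div_power_eq_pa_reversed[OF that, of a] len by simp
  have on_circle: "pa_reversed a v \<in> regionC \<tau>0 \<tau>1 \<tau>2" if "cmod v = 1 / \<alpha>" for v
  proof -
    have "v \<noteq> 0" using that assms(4) by auto
    then show ?thesis
      using on_\<alpha>[of "1 / v"] reversed_at[of "1 / v"] that by (simp add: norm_divide)
  qed
  have "pa a z / z ^ n \<in> regionC \<tau>0 \<tau>1 \<tau>2" if "cmod z = \<beta>" for z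
  proof -
    have z: "z \<noteq> 0" using that assms(4,5) by auto
    have "cmod (1 / z) \<le> 1 / \<alpha>"
      using that assms(4,5) by (simp add: norm_divide frac_le)
    then have "pa_reversed a (1 / z) \<in> regionC \<tau>0 \<tau>1 \<tau>2"
      using assms(1,4) by (intro entire_regionC_on_cball[OF _ _ holomorphic_pa_reversed on_circle]) auto
    then show ?thesis using reversed_at[OF z] by simp
  qed
  with len show "a \<in> setB \<tau>0 \<tau>1 \<tau>2 n \<beta>" unfolding setB_def by auto
qed

end
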